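(* In the coalition formation game above, every improvement path under the Marginal Utility order is finite. That is, there is no infinite sequence of profiles $s^{(0)},s^{(1)},s^{(2)},\dots$ such that for each $k$, $s^{(k+1)}$ is obtained from $s^{(k)}$ by a single UAV $j$ switching from task $s^{(k)}_j$ to a task $t\ne s^{(k)}_j$ with $C_t(s^{(k)})\cup\{j\}\succ_j C_{s^{(k)}_j}(s^{(k)})$. In particular, any procedure (such as the paper's MUCFC-CFG algorithm) that changes the partition only by such strictly improving unilateral switches makes finitely many changes, and if it stops only when no such switch exists, it terminates at a stable coalition partition.
   Context: $\mathcal M=\{1,\dots,M\}$ is a finite set of tasks and $\mathcal N=\{1,\dots,N\}$ a finite set of UAVs; a profile $s=(s_1,\dots,s_N)\in\mathcal M^N$ assigns task $s_j$ to UAV $j$ and induces coalitions $C_i(s)=\{j: s_j=i\}$. For each task $i$, $V_i$ is a real-valued characteristic function on subsets of $\mathcal N$ with $V_i(\emptyset)=0$. Shapley value of $j\in C$ for a coalition $C$ executing task $i$: $u_j(C)=\sum_{C'\subseteq C\setminus\{j\}}\frac{|C'|!(|C|-|C'|-1)!}{|C|!}[V_i(C'\cup\{j\})-V_i(C')]$. Marginal Utility order: for $j\in C$, $\mathrm{MU}_j(C)=u_j(C)+\sum_{g\in C\setminus\{j\}}[u_g(C)-u_g(C\setminus\{j\})]$ (Shapley values computed w.r.t. the task executed by $C$), and $C_k\succ_j C_l$ iff $\mathrm{MU}_j(C_k)>\mathrm{MU}_j(C_l)$. A partition is stable if no UAV $j$ and task $t\ne s_j$ satisfy $C_t\cup\{j\}\succ_j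 C_{s_j}$. *)

theory Defs
  imports Complex_Main "HOL-Library.FuncSet"
begin

text \<open>Tasks are 1..M, UAVs are 1..N. A profile assigns a task to every UAV
 (extensional function, undefined outside 1..N). V i is the characteristic
 function of task i.\<close>

definition profiles :: "nat \<Rightarrow> nat \<Rightarrow> (nat \<Rightarrow> nat) set" where
  "profiles M N = {1..N} \<rightarrow>\<^sub>E {1..M}"

definition coalition :: "nat \<Rightarrow> (nat \<Rightarrow> nat) \<Rightarrow> nat \<Rightarrow> nat set" where
  "coalition N s i = {j \<in> {1..N}. s j = i}"

definition shapley :: "(nat \<Rightarrow> nat set \<Rightarrow> real) \<Rightarrow> nat \<Rightarrow> nat set \<Rightarrow> nat \<Rightarrow> real" where
  "shapley V i C j =
     (\<Sum>C'\<in>Pow (C - {j}).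
        (fact (card C') * fact (card C - card C' - 1) / fact (card C))
        * (V i (C' \<union> {j}) - V i C'))"

definition MU :: "(nat \<Rightarrow> nat set \<Rightarrow> real) \<Rightarrow> nat \<Rightarrow> nat set \<Rightarrow> nat \<Rightarrow> real" where
  "MU V i C j = shapley V i C j
     + (\<Sum>g\<in>C - {j}. shapley V i C g - shapley V i (C - {j}) g)"

definition improving_switch ::
  "nat \<Rightarrow> nat \<Rightarrow> (nat \<Rightarrow> nat set \<Rightarrow> real) \<Rightarrow> (nat \<Rightarrow> nat) \<Rightarrow> (nat \<Rightarrow> nat) \<Rightarrow> bool" where
  "improving_switch M N V s s' \<longleftrightarrow>
     (\<exists>j\<in>{1..N}. \<exists>t\<in>{1..M}. t \<noteq> s j \<and> s' = s(j := t) \<and>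
        MU V t (coalition N s t \<union> {j}) j > MU V (s j) (coalition N s (s j)) j)"

end

theory Submission
  imports Defs
begin

text \<open>The marginal utility of j in C is the total Shapley value of C minus that of
  C - {j}, so efficiency of the Shapley value turns it into the plain marginal contribution
  V(C) - V(C - {j}). Hence an improving switch strictly increases the total value of the
  partition (the sum of V i over its coalitions), an exact potential, which takes only
  finitely many values on the finite set of profiles.\<close>

definition shapley_weight :: "nat \<Rightarrow> nat \<Rightarrow> real" where
  "shapley_weight n k = fact k * fact (n - k - 1) / fact n"

lemma sum_Pow_remove_insert:
  fixes g :: "'a set \<Rightarrow> 'b::comm_semiring_1"
  assumes "finite C"
  shows "(\<Sum>j\<in>C. \<Sum>S\<in>Pow (C - {j}). g (insert j S)) = (\<Sum>T\<in>Pow C. of_nat (card T) * g T)"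
proof -
  have reindex: "(\<Sum>S\<in>Pow (C - {j}). g (insert j S)) = (\<Sum>T\<in>{T\<in>Pow C. j \<in> T}. g T)"
    if "j \<in> C" for j
  proof (rule sym, rule sum.reindex_cong[of "insert j"])
    show "inj_on (insert j) (Pow (C - {j}))"
      by (auto simp: inj_on_def)
    show "{T \<in> Pow C. j \<in> T} = insert j ` Pow (C - {j})"
    proof (intro equalityI subsetI)
      fix T assume "T \<in> {T \<in> Pow C. j \<in> T}"
      then have "T = insert j (T - {j})" "T - {j} \<in> Pow (C - {j})" by auto
      then show "T \<in> insert j ` Pow (C - {j})" by blast
    qed (use \<open>j \<in> C\<close> in auto)
  qed auto
  have "(\<Sum>j\<in>C. \<Sum>S\<in>Pow (C - {j}). g (insert j S)) = (\<Sum>j\<in>C. \<Sum>T\<in>{T\<in>Pow C. j \<in> T}. g T)"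
    using reindex by simp
  also have "\<dots> = (\<Sum>T\<in>Pow C. \<Sum>j\<in>{j\<in>C. j \<in> T}. g T)"
    by (rule sum.swap_restrict) (use assms in auto)
  also have "\<dots> = (\<Sum>T\<in>Pow C. of_nat (card T) * g T)"
  proof (rule sum.cong)
    fix T assume "T \<in> Pow C"
    then have "{j\<in>C. j \<in> T} = T" by auto
    then show "(\<Sum>j\<in>{j\<in>C. j \<in> T}. g T) = of_nat (card T) * g T" by simp
  qed simp
  finally show ?thesis .
qed

lemma sum_Pow_remove:
  fixes g :: "'a set \<Rightarrow> 'b::comm_semiring_1"
  assumes "finite C"
  shows "(\<Sum>j\<in>C. \<Sum>S\<in>Pow (C - {j}). g S) = (\<Sum>T\<in>Pow C. of_nat (card C - card T) * g T)"
proof -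
  have "Pow (C - {j}) = {T\<in>Pow C. j \<notin> T}" for j
    by auto
  then have "(\<Sum>j\<in>C. \<Sum>S\<in>Pow (C - {j}). g S) = (\<Sum>j\<in>C. \<Sum>T\<in>{T\<in>Pow C. j \<notin> T}. g T)"
    by simp
  also have "\<dots> = (\<Sum>T\<in>Pow C. \<Sum>j\<in>{j\<in>C. j \<notin> T}. g T)"
    by (rule sum.swap_restrict) (use assms in auto)
  also have "\<dots> = (\<Sum>T\<in>Pow C. of_nat (card C - card T) * g T)"
  proof (rule sum.cong)
    fix T assume "T \<in> Pow C"
    then have "{j\<in>C. j \<notin> T} = C - T" "T \<subseteq> C" by auto
    then have "card {j\<in>C. j \<notin> T} = card C - card T"
      using assms by (simp add: card_Diff_subset finite_subset)
    then show "(\<Sum>j\<in>{j\<in>C. j \<notin> T}. g T) = of_nat (card C - card T) * g T" by simp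
  qed simp
  finally show ?thesis .
qed

lemma shapley_weight_telescope:
  assumes "k \<le> n" "n \<ge> 1"
  shows "real k * shapley_weight n (k - 1) - real (n - k) * shapley_weight n k
           = (if k = n then 1 else if k = 0 then -1 else 0)"
proof -
  have fact_n: "fact n = real n * fact (n - 1)"
    by (rule fact_reduce) (use assms in simp)
  consider "k = n" | "k = 0" | "0 < k" "k < n"
    using assms by linarith
  then show ?thesis
  proof cases
    case 1
    then show ?thesis using assms fact_n by (simp add: shapley_weight_def)
  next
    case 2
    then show ?thesis using assms fact_n by (simp add: shapley_weight_def)
  next
    case 3
    have "shapley_weight n (k - 1) = fact (k - 1) * fact (n - k) / fact n"
      using 3 by (simp add: shapley_weight_def Suc_diff_Suc)
    moreover have "fact (n - k) = real (n - k) * fact (n - k - 1)"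
      by (rule fact_reduce) (use 3 in simp)
    moreover have "fact k = real k * fact (k - 1)"
      by (rule fact_reduce) (use 3 in simp)
    ultimately show ?thesis
      using 3 by (simp add: shapley_weight_def)
  qed
qed

lemma shapley_eq_weighted_sum:
  "shapley V i C j =
     (\<Sum>S\<in>Pow (C - {j}). shapley_weight (card C) (card S) * (V i (insert j S) - V i S))"
  by (simp add: shapley_def shapley_weight_def)

lemma shapley_efficiency:
  assumes "finite C"
  shows "(\<Sum>j\<in>C. shapley V i C j) = V i C - V i {}"
proof (cases "C = {}")
  case False
  define n where "n = card C"
  define w where "w = shapley_weight n"
  have n: "n \<ge> 1"
    using False assms by (simp add: n_def Suc_le_eq card_gt_0_iff)
  have card_insert_S: "w (card S) = w (card (insert j S) - 1)" if "S \<in> Pow (C - {j})" for j S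
  proof -
    have "finite S" "j \<notin> S"
      using that assms finite_subset by auto
    then show ?thesis by simp
  qed
  have "(\<Sum>j\<in>C. shapley V i C j)
      = (\<Sum>j\<in>C. \<Sum>S\<in>Pow (C - {j}). w (card (insert j S) - 1) * V i (insert j S))
        - (\<Sum>j\<in>C. \<Sum>S\<in>Pow (C - {j}). w (card S) * V i S)"
    unfolding shapley_eq_weighted_sum w_def[symmetric] n_def[symmetric] right_diff_distrib
      sum_subtractf
    by (intro arg_cong2[where f = minus] sum.cong refl) (simp add: card_insert_S)
  also have "\<dots> = (\<Sum>T\<in>Pow C. (real (card T) * w (card T - 1) - real (n - card T) * w (card T)) * V i T)"
    using sum_Pow_remove_insert[OF assms, of "\<lambda>T. w (card T - 1) * V i T"]
      sum_Pow_remove[OF assms, of "\<lambda>T. w (card T) * V i T"]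
    by (simp add: n_def left_diff_distrib sum_subtractf mult.assoc)
  also have "\<dots> = (\<Sum>T\<in>Pow C. (if T = C then 1 else if T = {} then -1 else 0) * V i T)"
  proof (rule sum.cong)
    fix T assume "T \<in> Pow C"
    then have "card T \<le> n" "card T = n \<longleftrightarrow> T = C" "card T = 0 \<longleftrightarrow> T = {}"
      using assms card_subset_eq[of C T] by (auto simp: n_def card_mono finite_subset)
    then show "(real (card T) * w (card T - 1) - real (n - card T) * w (card T)) * V i T
        = (if T = C then 1 else if T = {} then -1 else 0) * V i T"
      using shapley_weight_telescope[OF _ n] by (simp add: w_def)
  qed simp
  also have "\<dots> = (\<Sum>T\<in>{C, {}}. (if T = C then 1 else if T = {} then -1 else 0) * V i T)"
    by (rule sum.mono_neutral_right) (use assms in auto)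
  also have "\<dots> = V i C - V i {}"
    using False by simp
  finally show ?thesis .
qed simp

lemma MU_eq_marginal_contribution:
  assumes "finite C" "j \<in> C"
  shows "MU V i C j = V i C - V i (C - {j})"
proof -
  have "MU V i C j = (\<Sum>g\<in>C. shapley V i C g) - (\<Sum>g\<in>C - {j}. shapley V i (C - {j}) g)"
    unfolding MU_def using assms by (simp add: sum_subtractf sum.remove)
  then show ?thesis
    using assms by (simp add: shapley_efficiency)
qed

lemma coalition_fun_upd:
  assumes "j \<in> {1..N}"
  shows "coalition N (s(j := t)) i =
           (if i = t then insert j (coalition N s i) else coalition N s i - {j})"
  using assms unfolding coalition_def by auto

definition total_value :: "nat \<Rightarrow> nat \<Rightarrow> (nat \<Rightarrow> nat set \<Rightarrow> real) \<Rightarrow> (nat \<Rightarrow> nat) \<Rightarrow> real" where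
  "total_value M N V s = (\<Sum>i\<in>{1..M}. V i (coalition N s i))"

lemma total_value_fun_upd:
  assumes j: "j \<in> {1..N}" and a: "s j \<in> {1..M}" and t: "t \<in> {1..M}" "t \<noteq> s j"
  shows "total_value M N V (s(j := t)) = total_value M N V s
           + (V t (insert j (coalition N s t)) - V t (coalition N s t))
           - (V (s j) (coalition N s (s j)) - V (s j) (coalition N s (s j) - {j}))"
proof -
  define gain where "gain = V t (insert j (coalition N s t)) - V t (coalition N s t)"
  define loss where
    "loss = V (s j) (coalition N s (s j)) - V (s j) (coalition N s (s j) - {j})"
  have "V i (coalition N (s(j := t)) i)
      = V i (coalition N s i) + (if i = t then gain else 0) - (if i = s j then loss else 0)" for i
  proof -
    have "coalition N s i - {j} = coalition N s i" if "i \<noteq> s j"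
      using that unfolding coalition_def by auto
    then show ?thesis
      using t by (simp add: coalition_fun_upd[OF j] gain_def loss_def)
  qed
  then show ?thesis
    using a t by (simp add: total_value_def sum.distrib sum_subtractf gain_def loss_def)
qed

lemma improving_switch_profiles:
  assumes "s \<in> profiles M N" "improving_switch M N V s s'"
  shows "s' \<in> profiles M N"
  using assms unfolding improving_switch_def profiles_def by (auto simp: PiE_def extensional_def)

lemma improving_switch_total_value_less:
  assumes "s \<in> profiles M N" "improving_switch M N V s s'"
  shows "total_value M N V s < total_value M N V s'"
proof -
  obtain j t where j: "j \<in> {1..N}" and t: "t \<in> {1..M}" "t \<noteq> s j" and s': "s' = s(j := t)"
    and improves: "MU V t (coalition N s t \<union> {j}) j > MU V (s j) (coalition N s (s j)) j"
    using assms(2) unfolding improving_switch_def by blast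
  have a: "s j \<in> {1..M}"
    using assms(1) j unfolding profiles_def by auto
  have "finite (coalition N s i)" for i
    unfolding coalition_def by simp
  moreover have "j \<notin> coalition N s t" "j \<in> coalition N s (s j)"
    using t j unfolding coalition_def by auto
  ultimately have "MU V t (coalition N s t \<union> {j}) j
                     = V t (insert j (coalition N s t)) - V t (coalition N s t)"
    and "MU V (s j) (coalition N s (s j)) j
           = V (s j) (coalition N s (s j)) - V (s j) (coalition N s (s j) - {j})"
    by (simp_all add: MU_eq_marginal_contribution)
  then show ?thesis
    using improves total_value_fun_upd[where s = s, OF j a t] s' by simp
qed

lemma finite_set_no_infinite_ascent:
  fixes f :: "'a \<Rightarrow> 'b::linorder"
  assumes "finite A" "\<And>k. seq k \<in> A" "\<And>k. f (seq k) < f (seq (Suc k))"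
  shows False
proof -
  have "strict_mono (f \<circ> seq)"
    using assms(3) by (simp add: strict_mono_Suc_iff)
  then have "inj seq"
    by (metis comp_apply injI strict_mono_eq)
  moreover have "range seq \<subseteq> A"
    using assms(2) by auto
  ultimately show False
    using assms(1) finite_subset finite_imageD infinite_UNIV_nat by metis
qed

theorem theorem4p6:
  fixes M N :: nat and V :: "nat \<Rightarrow> nat set \<Rightarrow> real"
  assumes "\<forall>i\<in>{1..M}. V i {} = 0"
  shows "\<not> (\<exists>seq :: nat \<Rightarrow> (nat \<Rightarrow> nat).
             seq 0 \<in> profiles M N \<and>
             (\<forall>k. improving_switch M N V (seq k) (seq (Suc k))))"
proof
  assume "\<exists>seq :: nat \<Rightarrow> (nat \<Rightarrow> nat). seq 0 \<in> profiles M N \<and>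
             (\<forall>k. improving_switch M N V (seq k) (seq (Suc k)))"
  then obtain seq :: "nat \<Rightarrow> (nat \<Rightarrow> nat)" where "seq 0 \<in> profiles M N"
    and switch: "\<And>k. improving_switch M N V (seq k) (seq (Suc k))" by blast
  then have profile: "seq k \<in> profiles M N" for k
    by (induction k) (auto intro: improving_switch_profiles)
  have "finite (profiles M N)"
    unfolding profiles_def by (simp add: finite_PiE)
  then show False
    using profile improving_switch_total_value_less[OF profile switch]
    by (rule finite_set_no_infinite_ascent[where f = "total_value M N V"])
qed

end
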